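(* Let $G$ be a finite abelian group with $N = |G|$, let $A \subseteq G$, let $\Gamma$ be a finite set of characters of $G$, let $\delta > 0$, write $\psi = \psi_{\Gamma,\delta}$, and let $\rho > 0$. Then the number of $x \in A$ for which $(A \ast \psi)(x) \leq \rho$ is at most $\rho N$.
   Context: Sets are identified with indicator functions; $f \ast g(x) = \sum_y f(y)g(x-y)$; arguments of complex numbers lie in $(-\pi,\pi]$. For $\Gamma = \{\gamma_1,\dots,\gamma_d\}$ let $\|x\|_\Gamma = \max_j|\arg\gamma_j(x)|/(2\pi)$ ($\|x\|_\emptyset = 0$), $B_{\Gamma,t} = \{x : \|x\|_\Gamma \leq t\}$, $\widetilde{B}_{\Gamma,\delta}(x) = \int_0^\infty B_{\Gamma,t}(x)\delta^{-1}e^{-t/\delta}\,dt$, $\beta_{\Gamma,\delta} = \widetilde{B}_{\Gamma,\delta}/\sum_y \widetilde{B}_{\Gamma,\delta}(y)$, and $\psi_{\Gamma,\delta} = \beta_{\Gamma,\delta}\ast\beta_{\Gamma,\delta}$. *)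

theory Defs
  imports "HOL-Analysis.Analysis"
begin

definition character :: "('a::ab_group_add \<Rightarrow> complex) \<Rightarrow> bool" where
  "character \<gamma> \<longleftrightarrow> (\<forall>x y. \<gamma> (x + y) = \<gamma> x * \<gamma> y) \<and> (\<forall>x. norm (\<gamma> x) = 1)"

definition conv :: "('a::ab_group_add \<Rightarrow> real) \<Rightarrow> ('a \<Rightarrow> real) \<Rightarrow> 'a \<Rightarrow> real" where
  "conv f g x = (\<Sum>y\<in>UNIV. f y * g (x - y))"

text \<open>Bohr norm: max over gamma in Gamma of |arg gamma(x)|/(2 pi), 0 if Gamma empty
(Arg takes values in (-pi, pi]).\<close>
definition bnorm :: "('a \<Rightarrow> complex) set \<Rightarrow> 'a \<Rightarrow> real" where
  "bnorm \<Gamma> x = (if \<Gamma> = {} then 0 else Max ((\<lambda>\<gamma>. \<bar>Arg (\<gamma> x)\<bar> / (2 * pi)) ` \<Gamma>))"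

definition bohr :: "('a \<Rightarrow> complex) set \<Rightarrow> real \<Rightarrow> 'a \<Rightarrow> real" where
  "bohr \<Gamma> t x = indicator {y. bnorm \<Gamma> y \<le> t} x"

definition bohr_smooth :: "('a \<Rightarrow> complex) set \<Rightarrow> real \<Rightarrow> 'a \<Rightarrow> real" where
  "bohr_smooth \<Gamma> \<delta> x = (LBINT t:{0..}. bohr \<Gamma> t x * (exp (- t / \<delta>) / \<delta>))"

definition beta :: "('a::finite \<Rightarrow> complex) set \<Rightarrow> real \<Rightarrow> 'a \<Rightarrow> real" where
  "beta \<Gamma> \<delta> x = bohr_smooth \<Gamma> \<delta> x / (\<Sum>y\<in>UNIV. bohr_smooth \<Gamma> \<delta> y)"

definition psi :: "('a::{finite,ab_group_add} \<Rightarrow> complex) set \<Rightarrow> real \<Rightarrow> 'a \<Rightarrow> real" where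
  "psi \<Gamma> \<delta> = conv (beta \<Gamma> \<delta>) (beta \<Gamma> \<delta>)"

end

theory Submission
  imports Defs
begin

text \<open>Let \<open>p = \<beta> * \<beta>\<close> and let \<open>S\<close> be the set of \<open>x \<in> A\<close> with \<open>(A * p)(x) \<le> \<rho>\<close>.
Summing over \<open>x \<in> S\<close> gives \<open>\<Sum>x\<in>S. \<Sum>y\<in>S. p (x - y) \<le> \<rho> |S|\<close>. Since \<open>\<beta>\<close> is
symmetric, this double sum equals \<open>\<Sum>u. (\<Sum>x\<in>S. \<beta> (x - u))\<^sup>2\<close>, and as the inner sums add
up to \<open>|S|\<close>, Cauchy-Schwarz bounds it below by \<open>|S|\<^sup>2 / N\<close>. Hence \<open>|S| \<le> \<rho> N\<close>.\<close>

lemma exponential_density_integral: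
  assumes "(\<delta>::real) > 0"
  shows "(LBINT t:{0..}. exp (- t / \<delta>) / \<delta>) = 1"
proof -
  have "((\<lambda>t::real. exp (-(1/\<delta>) * t)) has_integral exp (-(1/\<delta>) * 0) / (1/\<delta>)) {0..}"
    by (rule has_integral_exp_minus_to_infinity) (use assms in simp)
  from has_integral_divide[OF this, of \<delta>]
  have has_int: "((\<lambda>t::real. exp (- t / \<delta>) / \<delta>) has_integral 1) {0..}"
    using assms by simp
  then have "(\<lambda>t::real. exp (- t / \<delta>) / \<delta>) absolutely_integrable_on {0..}"
    using assms by (subst absolutely_integrable_on_iff_nonneg) (auto simp: integrable_on_def)
  then have "set_integrable lborel {0..} (\<lambda>t::real. exp (- t / \<delta>) / \<delta>)"
    unfolding set_integrable_def by (subst (asm) integrable_completion) auto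
  then have "(LBINT t:{0..}. exp (- t / \<delta>) / \<delta>) = integral {0..} (\<lambda>t. exp (- t / \<delta>) / \<delta>)"
    by (rule set_borel_integral_eq_integral(2))
  also have "\<dots> = 1"
    using has_int by (rule integral_unique)
  finally show ?thesis .
qed

lemma character_zero:
  assumes "character \<gamma>"
  shows "\<gamma> 0 = 1"
proof -
  have "\<gamma> 0 = \<gamma> 0 * \<gamma> 0" "\<gamma> 0 \<noteq> 0"
    using assms unfolding character_def by (metis add_0, metis norm_zero zero_neq_one)
  then show ?thesis
    by (metis mult_cancel_left2)
qed

lemma character_uminus:
  assumes "character \<gamma>"
  shows "\<gamma> (- x) = cnj (\<gamma> x)"
proof -
  have "\<gamma> x * \<gamma> (- x) = 1"
    using assms character_zero[OF assms] unfolding character_def by (metis add.right_inverse)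
  moreover have "\<gamma> x * cnj (\<gamma> x) = 1"
    using assms unfolding character_def by (metis complex_norm_square of_real_1 power_one)
  ultimately show ?thesis
    by (metis mult_cancel_left zero_neq_one mult_zero_left)
qed

lemma bnorm_uminus:
  assumes "\<forall>\<gamma>\<in>\<Gamma>. character \<gamma>"
  shows "bnorm \<Gamma> (- x) = bnorm \<Gamma> x"
proof -
  have "(\<lambda>\<gamma>. \<bar>Arg (\<gamma> (- x))\<bar> / (2 * pi)) ` \<Gamma> = (\<lambda>\<gamma>. \<bar>Arg (\<gamma> x)\<bar> / (2 * pi)) ` \<Gamma>"
    using assms by (intro image_cong refl) (auto simp: character_uminus Arg_cnj)
  then show ?thesis
    unfolding bnorm_def by simp
qed

lemma bnorm_zero:
  assumes "\<forall>\<gamma>\<in>\<Gamma>. character \<gamma>"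
  shows "bnorm \<Gamma> 0 = 0"
proof -
  have "(\<lambda>\<gamma>. \<bar>Arg (\<gamma> 0)\<bar> / (2 * pi)) ` \<Gamma> = {0}" if "\<Gamma> \<noteq> {}"
    using that assms by (auto simp: image_iff character_zero)
  then show ?thesis
    unfolding bnorm_def by auto
qed

lemma bohr_smooth_uminus:
  assumes "\<forall>\<gamma>\<in>\<Gamma>. character \<gamma>"
  shows "bohr_smooth \<Gamma> \<delta> (- x) = bohr_smooth \<Gamma> \<delta> x"
proof -
  have "bohr \<Gamma> t (- x) = bohr \<Gamma> t x" for t
    unfolding bohr_def by (simp add: bnorm_uminus[OF assms] indicator_def)
  then show ?thesis
    unfolding bohr_smooth_def by simp
qed

lemma bohr_smooth_nonneg:
  assumes "\<delta> > 0"
  shows "bohr_smooth \<Gamma> \<delta> x \<ge> 0"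
  unfolding bohr_smooth_def set_lebesgue_integral_def
  using assms by (intro Bochner_Integration.integral_nonneg_AE AE_I2) (auto simp: bohr_def indicator_def)

lemma bohr_smooth_zero:
  assumes "\<forall>\<gamma>\<in>\<Gamma>. character \<gamma>" and "\<delta> > 0"
  shows "bohr_smooth \<Gamma> \<delta> 0 = 1"
proof -
  have "bohr_smooth \<Gamma> \<delta> 0 = (LBINT t:{0..}. exp (- t / \<delta>) / \<delta>)"
    unfolding bohr_smooth_def
    by (rule set_lebesgue_integral_cong) (auto simp: bohr_def bnorm_zero[OF assms(1)])
  then show ?thesis
    using exponential_density_integral[OF assms(2)] by simp
qed

lemma beta_probability_density:
  fixes \<Gamma> :: "('a::{finite,ab_group_add} \<Rightarrow> complex) set"
  assumes "\<forall>\<gamma>\<in>\<Gamma>. character \<gamma>" and "\<delta> > 0"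
  shows "beta \<Gamma> \<delta> x \<ge> 0" and "sum (beta \<Gamma> \<delta>) UNIV = 1" and "beta \<Gamma> \<delta> (- x) = beta \<Gamma> \<delta> x"
proof -
  define T where "T = (\<Sum>y\<in>(UNIV::'a set). bohr_smooth \<Gamma> \<delta> y)"
  have "bohr_smooth \<Gamma> \<delta> 0 \<le> T"
    unfolding T_def by (rule member_le_sum) (use bohr_smooth_nonneg[OF assms(2)] in auto)
  then have "T > 0"
    using bohr_smooth_zero[OF assms] by simp
  moreover have "beta \<Gamma> \<delta> = (\<lambda>x. bohr_smooth \<Gamma> \<delta> x / T)"
    unfolding beta_def T_def ..
  ultimately show "beta \<Gamma> \<delta> x \<ge> 0" and "sum (beta \<Gamma> \<delta>) UNIV = 1"
      and "beta \<Gamma> \<delta> (- x) = beta \<Gamma> \<delta> x"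
    using bohr_smooth_nonneg[OF assms(2), of \<Gamma> x]
    by (simp_all add: T_def bohr_smooth_uminus[OF assms(1)] flip: sum_divide_distrib)
qed

lemma sum_UNIV_diff_reindex:
  "(\<Sum>y\<in>UNIV. g (x - y)) = (\<Sum>y\<in>(UNIV::'a::{finite,ab_group_add} set). g y)"
  by (rule sum.reindex_bij_witness[of _ "\<lambda>y. x - y" "\<lambda>y. x - y"]) auto

lemma conv_nonneg:
  assumes "\<And>x. f x \<ge> 0" and "\<And>x. g x \<ge> 0"
  shows "conv f g x \<ge> 0"
  unfolding conv_def using assms by (intro sum_nonneg) simp

lemma sum_le_conv_indicator:
  assumes "S \<subseteq> A" and "\<And>x. p x \<ge> 0"
  shows "(\<Sum>y\<in>S. p (x - y)) \<le> conv (indicator A) p (x::'a::{finite,ab_group_add})"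
proof -
  have "(\<Sum>y\<in>S. p (x - y)) = (\<Sum>y\<in>S. indicator A y * p (x - y))"
    using assms(1) by (intro sum.cong) (auto simp: indicator_def)
  also have "\<dots> \<le> (\<Sum>y\<in>UNIV. indicator A y * p (x - y))"
    using assms(2) by (intro sum_mono2) auto
  finally show ?thesis
    unfolding conv_def .
qed

lemma conv_self_symmetric_diff:
  fixes b :: "'a::{finite,ab_group_add} \<Rightarrow> real"
  assumes "\<And>x. b (- x) = b x"
  shows "conv b b (x - y) = (\<Sum>u\<in>UNIV. b (x - u) * b (y - u))"
proof -
  have "conv b b (x - y) = (\<Sum>u\<in>UNIV. b (x - u) * b (x - y - (x - u)))"
    unfolding conv_def by (rule sum_UNIV_diff_reindex[symmetric])
  also have "\<dots> = (\<Sum>u\<in>UNIV. b (x - u) * b (y - u))"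
    using assms[of "y - u" for u] by (simp add: algebra_simps)
  finally show ?thesis .
qed

lemma card_square_le_sum_conv_self:
  fixes b :: "'a::{finite,ab_group_add} \<Rightarrow> real"
  assumes "sum b UNIV = 1" and "\<And>x. b (- x) = b x"
  shows "real (card S) ^ 2 \<le> real (card (UNIV::'a set)) * (\<Sum>x\<in>S. \<Sum>y\<in>S. conv b b (x - y))"
proof -
  define f where "f u = (\<Sum>x\<in>S. b (x - u))" for u
  have "(\<Sum>u\<in>UNIV. f u) = (\<Sum>x\<in>S. \<Sum>u\<in>UNIV. b (x - u))"
    unfolding f_def by (rule sum.swap)
  also have "\<dots> = card S"
    by (simp add: sum_UNIV_diff_reindex assms(1))
  finally have "real (card S) ^ 2 \<le> (\<Sum>u\<in>UNIV. f u ^ 2) * real (card (UNIV::'a set))"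
    using sum_squared_le_sum_of_squares[of f UNIV] by simp
  also have "(\<Sum>u\<in>UNIV. f u ^ 2) = (\<Sum>u\<in>UNIV. \<Sum>x\<in>S. \<Sum>y\<in>S. b (x - u) * b (y - u))"
    by (simp add: f_def power2_eq_square sum_product)
  also have "\<dots> = (\<Sum>x\<in>S. \<Sum>y\<in>S. \<Sum>u\<in>UNIV. b (x - u) * b (y - u))"
    by (subst sum.swap) (simp only: sum.swap[of _ UNIV])
  also have "\<dots> = (\<Sum>x\<in>S. \<Sum>y\<in>S. conv b b (x - y))"
    by (simp only: conv_self_symmetric_diff[of b, OF assms(2)])
  finally show ?thesis
    by (simp add: mult.commute)
qed

theorem card_conv_indicator_le:
  fixes b :: "'a::{finite,ab_group_add} \<Rightarrow> real" and A :: "'a set"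
  assumes "\<And>x. b x \<ge> 0" and "sum b UNIV = 1" and "\<And>x. b (- x) = b x" and "\<rho> > 0"
  shows "real (card {x\<in>A. conv (indicator A) (conv b b) x \<le> \<rho>}) \<le> \<rho> * real (card (UNIV::'a set))"
proof -
  define S where "S = {x\<in>A. conv (indicator A) (conv b b) x \<le> \<rho>}"
  define N where "N = real (card (UNIV::'a set))"
  have "(\<Sum>y\<in>S. conv b b (x - y)) \<le> \<rho>" if "x \<in> S" for x
    using that sum_le_conv_indicator[of S A "conv b b" x] conv_nonneg[of b b] assms(1)
    unfolding S_def by fastforce
  then have "(\<Sum>x\<in>S. \<Sum>y\<in>S. conv b b (x - y)) \<le> \<rho> * card S"
    using sum_mono[of S _ "\<lambda>_. \<rho>"] by (simp add: mult.commute)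
  then have "N * (\<Sum>x\<in>S. \<Sum>y\<in>S. conv b b (x - y)) \<le> N * (\<rho> * card S)"
    by (rule mult_left_mono) (simp add: N_def)
  with card_square_le_sum_conv_self[of b, OF assms(2,3), of S]
  have "real (card S) * real (card S) \<le> real (card S) * (\<rho> * N)"
    unfolding N_def power2_eq_square by (simp only: mult_ac)
  then have "card S \<le> \<rho> * N"
    using assms(4) by (cases "card S = 0") (simp_all add: N_def)
  then show ?thesis
    unfolding S_def N_def .
qed

theorem lemma7p2:
  fixes A :: "'a::{finite,ab_group_add} set"
    and \<Gamma> :: "('a \<Rightarrow> complex) set"
    and \<delta> \<rho> :: real
  assumes "finite \<Gamma>" and "\<forall>\<gamma>\<in>\<Gamma>. character \<gamma>"
    and "\<delta> > 0" and "\<rho> > 0"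
  shows "real (card {x\<in>A. conv (indicator A) (psi \<Gamma> \<delta>) x \<le> \<rho>}) \<le> \<rho> * real (card (UNIV :: 'a set))"
  unfolding psi_def
  using card_conv_indicator_le[of "beta \<Gamma> \<delta>", OF beta_probability_density[OF assms(2,3)] assms(4)] .

end
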